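(* Let $k$ be an $\mathbf{F}_p$-algebra, $m\in\mathbf{N}\cup\{\infty\}$, $A:=k[[\pi]]/(\pi^{m+1})$, and let $\phi:A\to\operatorname{HS}^m(k)[[\pi]]/(\pi^{m+1})$ be the ring homomorphism $\phi(\sum_ia_i\pi^i)=\sum_{n=0}^m\sum_{i=0}^nd^{[n-i]}a_i\,\pi^n$. Let $\overline{\phi}:\operatorname{HS}^m(A)\to\operatorname{HS}^m(k)$ be its transpose, i.e. the ring homomorphism with $\overline{\phi}(d^{[n]}a)$ equal to the coefficient of $\pi^n$ in $\phi(a)$. Let $\iota:\operatorname{HS}^m(k)\to\operatorname{HS}^m(A)$ be induced by $k\subset A$, let $J$ be the ideal of $\operatorname{HS}^m(A)$ generated by $d^{[n]}\pi^i-\delta_{ni}$ ($0\le n\le m$, $i\ge0$), and $\rho:\operatorname{HS}^m(k)\to\operatorname{HS}^m(A)/J$ the composite of $\iota$ with the quotient map. Then $\overline{\phi}\circ\iota=\mathrm{id}$, $\overline{\phi}$ vanishes on $J$ and so induces $\overline{\phi}^\#:\operatorname{HS}^m(A)/J\to\operatorname{HS}^m(k)$, and $\overline{\phi}^\#\circ\rho=\mathrm{id}$. Hence $\rho$ is injective, and therefore (being surjective) an isomorphism.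
   Context: For a ring $R$ and $m\in\mathbf{N}\cup\{\infty\}$, $\operatorname{HS}^m(R):=\mathbf{Z}[d^{[n]}a\mid a\in R,0\le n\le m]/\sim$, where $\sim$ is generated by $d^{[n]}(a+b)=d^{[n]}a+d^{[n]}b$, $d^{[n]}(ab)=\sum_{i+j=n}d^{[i]}a\,d^{[j]}b$, and $d^{[0]}1=1$; ring homomorphisms $\operatorname{HS}^m(A)\to S$ correspond to ring homomorphisms $A\to S[[\pi]]/(\pi^{m+1})$ via $a\mapsto\sum_nf(d^{[n]}a)\pi^n$. Here $\pi^{\infty+1}:=0$; $\delta_{ni}$ is the Kronecker delta; $a_i\in k$ are the coefficients of $a\in A$. It is known that $\rho$ is surjective. *)

theory Defs
  imports "HOL-Library.Poly_Mapping" "HOL-Library.Extended_Nat" "HOL-Computational_Algebra.Primes"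
begin

text \<open>The polynomial ring Z[v | v :: 'v], as the monoid ring of monomials
  (finitely supported exponent maps) with integer coefficients.\<close>
type_synonym 'v ipoly = "('v \<Rightarrow>\<^sub>0 nat) \<Rightarrow>\<^sub>0 int"

definition Var :: "'v \<Rightarrow> 'v ipoly" where
  "Var v = Poly_Mapping.single (Poly_Mapping.single v 1) 1"

definition peval :: "('v \<Rightarrow> 'b::comm_ring_1) \<Rightarrow> 'v ipoly \<Rightarrow> 'b" where
  "peval f P = (\<Sum>\<mu>\<in>Poly_Mapping.keys P.
       of_int (Poly_Mapping.lookup P \<mu>) * (\<Prod>v\<in>Poly_Mapping.keys \<mu>. f v ^ Poly_Mapping.lookup \<mu> v))"

definition gen_ideal :: "'a::comm_ring_1 set \<Rightarrow> 'a set" where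
  "gen_ideal S = {x. \<exists>F c. finite F \<and> F \<subseteq> S \<and> x = (\<Sum>s\<in>F. c s * s)}"

text \<open>A ring R is given by a carrier C and operations add, mul, one.
  HS^m(R) is presented as Z[Var (n,a)] modulo the ideal generated by the relations below.
  Variables Var (n,a) with n > m or a outside the carrier are not generators of HS^m(R);
  they are killed, which gives a ring canonically isomorphic to the quotient of
  Z[d^[n] a | a in R, n <= m] by the defining relations.\<close>
definition hs_rels :: "enat \<Rightarrow> 'a set \<Rightarrow> ('a \<Rightarrow> 'a \<Rightarrow> 'a) \<Rightarrow> ('a \<Rightarrow> 'a \<Rightarrow> 'a) \<Rightarrow> 'a
    \<Rightarrow> (nat \<times> 'a) ipoly set" where
  "hs_rels m C add mul one =
     {Var (n, a) | n a. m < enat n \<or> a \<notin> C}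
   \<union> {Var (n, add a b) - Var (n, a) - Var (n, b) | n a b. enat n \<le> m \<and> a \<in> C \<and> b \<in> C}
   \<union> {Var (n, mul a b) - (\<Sum>i\<le>n. Var (i, a) * Var (n - i, b)) | n a b.
        enat n \<le> m \<and> a \<in> C \<and> b \<in> C}
   \<union> {Var (0, one) - 1}"

definition hs_ideal :: "enat \<Rightarrow> 'a set \<Rightarrow> ('a \<Rightarrow> 'a \<Rightarrow> 'a) \<Rightarrow> ('a \<Rightarrow> 'a \<Rightarrow> 'a) \<Rightarrow> 'a
    \<Rightarrow> (nat \<times> 'a) ipoly set" where
  "hs_ideal m C add mul one = gen_ideal (hs_rels m C add mul one)"

definition HSk_ideal :: "enat \<Rightarrow> (nat \<times> 'k::comm_ring_1) ipoly set" where
  "HSk_ideal m = hs_ideal m UNIV (+) (*) 1"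

text \<open>Elements are coefficient sequences a = (a_i), with a_i = 0 for i > m.\<close>
definition A_carrier :: "enat \<Rightarrow> (nat \<Rightarrow> 'k::comm_ring_1) set" where
  "A_carrier m = {a. \<forall>i. m < enat i \<longrightarrow> a i = 0}"

definition A_add :: "(nat \<Rightarrow> 'k::comm_ring_1) \<Rightarrow> (nat \<Rightarrow> 'k) \<Rightarrow> nat \<Rightarrow> 'k" where
  "A_add a b = (\<lambda>i. a i + b i)"

definition A_mul :: "enat \<Rightarrow> (nat \<Rightarrow> 'k::comm_ring_1) \<Rightarrow> (nat \<Rightarrow> 'k) \<Rightarrow> nat \<Rightarrow> 'k" where
  "A_mul m a b = (\<lambda>i. if enat i \<le> m then (\<Sum>j\<le>i. a j * b (i - j)) else 0)"

definition A_const :: "'k::comm_ring_1 \<Rightarrow> nat \<Rightarrow> 'k" where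
  "A_const c = (\<lambda>i. if i = 0 then c else 0)"

definition A_one :: "nat \<Rightarrow> 'k::comm_ring_1" where
  "A_one = A_const 1"

definition A_pipow :: "enat \<Rightarrow> nat \<Rightarrow> nat \<Rightarrow> 'k::comm_ring_1" where
  "A_pipow m i = (\<lambda>j. if j = i \<and> enat i \<le> m then 1 else 0)"

definition HSA_ideal :: "enat \<Rightarrow> (nat \<times> (nat \<Rightarrow> 'k::comm_ring_1)) ipoly set" where
  "HSA_ideal m = hs_ideal m (A_carrier m) A_add (A_mul m) A_one"

definition iota :: "(nat \<times> 'k::comm_ring_1) ipoly \<Rightarrow> (nat \<times> (nat \<Rightarrow> 'k)) ipoly" where
  "iota = peval (\<lambda>(n, c). Var (n, A_const c))"

text \<open>phibar : HS^m(A) -> HS^m(k), the transpose of phi: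
  d^[n] a |-> coefficient of pi^n in phi(a) = sum_{i<=n} d^[n-i] a_i
  (on the genuine generators; the killed auxiliary variables go to 0).\<close>
definition phibar :: "enat \<Rightarrow> (nat \<times> (nat \<Rightarrow> 'k::comm_ring_1)) ipoly \<Rightarrow> (nat \<times> 'k) ipoly" where
  "phibar m = peval (\<lambda>(n, a). if enat n \<le> m \<and> a \<in> A_carrier m
                               then (\<Sum>i\<le>n. Var (n - i, a i)) else 0)"

definition J_gens :: "enat \<Rightarrow> (nat \<times> (nat \<Rightarrow> 'k::comm_ring_1)) ipoly set" where
  "J_gens m = {Var (n, A_pipow m i) - (if n = i then 1 else 0) | n i. enat n \<le> m}"

definition J_ideal :: "enat \<Rightarrow> (nat \<times> (nat \<Rightarrow> 'k::comm_ring_1)) ipoly set" where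
  "J_ideal m = gen_ideal (J_gens m)"

text \<open>The ideal of Z[...] whose quotient is HS^m(A)/J.\<close>
definition HSA_J_ideal :: "enat \<Rightarrow> (nat \<times> (nat \<Rightarrow> 'k::comm_ring_1)) ipoly set" where
  "HSA_J_ideal m = gen_ideal (hs_rels m (A_carrier m) A_add (A_mul m) A_one \<union> J_gens m)"

end

theory Submission
  imports Defs
begin

text \<open>
  All rings involved are presented as quotients of integer polynomial rings, and all maps as
  evaluation homomorphisms on representatives. An evaluation homomorphism respects the
  presentations as soon as it sends every defining relation into the target ideal, so each claim
  reduces to a check on generators. For \<open>phibar\<close> the additivity relations are immediate, and
  the Leibniz relations reduce to the multiplicativity of \<open>phi\<close>: after expanding, both sides
  are the sum of \<open>d\<^sup>[s] a\<^sub>j \<cdot> d\<^sup>[t] b\<^sub>u\<close> over \<open>s + j + t + u = n\<close>.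
  The generators of \<open>J\<close> are killed because \<open>d\<^sup>[l] 1 = 0\<close> in \<open>HS\<^sup>m(k)\<close> for \<open>l > 0\<close>, which
  follows from the Leibniz rule for \<open>1 \<cdot> 1\<close> by induction on \<open>l\<close>.
  Finally \<open>phibar (iota (d\<^sup>[n] c))\<close>
  is \<open>d\<^sup>[n] c\<close> up to terms \<open>d\<^sup>[i] 0\<close>, since the constant \<open>c\<close> has no higher coefficients; so
  if \<open>iota P\<close> lies in the ideal defining \<open>HS\<^sup>m(A)/J\<close>, then \<open>P \<equiv> phibar (iota P) \<equiv> 0\<close>.
\<close>

section \<open>Evaluation of integer polynomials\<close>

definition monom_eval :: "('v \<Rightarrow> 'b::comm_ring_1) \<Rightarrow> ('v \<Rightarrow>\<^sub>0 nat) \<Rightarrow> 'b" where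
  "monom_eval f \<mu> = (\<Prod>v\<in>Poly_Mapping.keys \<mu>. f v ^ Poly_Mapping.lookup \<mu> v)"

lemma monom_eval_superset:
  assumes "finite S" "Poly_Mapping.keys \<mu> \<subseteq> S"
  shows "monom_eval f \<mu> = (\<Prod>v\<in>S. f v ^ Poly_Mapping.lookup \<mu> v)"
  unfolding monom_eval_def
  by (rule prod.mono_neutral_left) (use assms in \<open>auto simp: in_keys_iff\<close>)

lemma monom_eval_add: "monom_eval f (\<mu> + \<nu>) = monom_eval f \<mu> * monom_eval f \<nu>"
proof -
  let ?S = "Poly_Mapping.keys \<mu> \<union> Poly_Mapping.keys \<nu>"
  have "monom_eval f (\<mu> + \<nu>) = (\<Prod>v\<in>?S. f v ^ Poly_Mapping.lookup (\<mu> + \<nu>) v)"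
    by (rule monom_eval_superset) (use keys_add[of \<mu> \<nu>] in auto)
  also have "\<dots> = (\<Prod>v\<in>?S. f v ^ Poly_Mapping.lookup \<mu> v) * (\<Prod>v\<in>?S. f v ^ Poly_Mapping.lookup \<nu> v)"
    by (simp add: lookup_add power_add prod.distrib)
  also have "\<dots> = monom_eval f \<mu> * monom_eval f \<nu>"
    by (subst (1 2) monom_eval_superset[of ?S]) auto
  finally show ?thesis .
qed

lemma monom_eval_0 [simp]: "monom_eval f 0 = 1"
  by (simp add: monom_eval_def)

lemma monom_eval_single [simp]: "monom_eval f (Poly_Mapping.single v k) = f v ^ k"
  by (simp add: monom_eval_def)

lemma peval_eq_sum_monom_eval:
  "peval f P = (\<Sum>\<mu>\<in>Poly_Mapping.keys P. of_int (Poly_Mapping.lookup P \<mu>) * monom_eval f \<mu>)"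
  by (simp add: peval_def monom_eval_def)

lemma peval_superset:
  assumes "finite S" "Poly_Mapping.keys P \<subseteq> S"
  shows "peval f P = (\<Sum>\<mu>\<in>S. of_int (Poly_Mapping.lookup P \<mu>) * monom_eval f \<mu>)"
  unfolding peval_eq_sum_monom_eval
  by (rule sum.mono_neutral_left) (use assms in \<open>auto simp: in_keys_iff\<close>)

lemma peval_add: "peval f (P + Q) = peval f P + peval f Q"
proof -
  let ?S = "Poly_Mapping.keys P \<union> Poly_Mapping.keys Q"
  have "peval f (P + Q) = (\<Sum>\<mu>\<in>?S. of_int (Poly_Mapping.lookup (P + Q) \<mu>) * monom_eval f \<mu>)"
    by (rule peval_superset) (use keys_add[of P Q] in auto)
  also have "\<dots> = (\<Sum>\<mu>\<in>?S. of_int (Poly_Mapping.lookup P \<mu>) * monom_eval f \<mu>)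
                 + (\<Sum>\<mu>\<in>?S. of_int (Poly_Mapping.lookup Q \<mu>) * monom_eval f \<mu>)"
    by (simp add: lookup_add distrib_right sum.distrib)
  also have "\<dots> = peval f P + peval f Q"
    by (subst (1 2) peval_superset[of ?S]) auto
  finally show ?thesis .
qed

lemma peval_0 [simp]: "peval f 0 = 0"
  by (simp add: peval_def)

lemma peval_uminus: "peval f (- P) = - peval f P"
  by (simp add: peval_eq_sum_monom_eval sum_negf)

lemma peval_diff: "peval f (P - Q) = peval f P - peval f Q"
  using peval_add[of f P "- Q"] by (simp add: peval_uminus)

lemma peval_sum: "peval f (\<Sum>i\<in>I. g i) = (\<Sum>i\<in>I. peval f (g i))"
  by (induction I rule: infinite_finite_induct) (auto simp: peval_add)

lemma peval_single: "peval f (Poly_Mapping.single \<mu> c) = of_int c * monom_eval f \<mu>"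
  by (subst peval_superset[of "{\<mu>}"]) auto

lemma sum_single_lookup:
  "(\<Sum>\<mu>\<in>Poly_Mapping.keys P. Poly_Mapping.single \<mu> (Poly_Mapping.lookup P \<mu>)) = P"
proof (rule poly_mapping_eqI)
  fix \<nu>
  have "Poly_Mapping.lookup (\<Sum>\<mu>\<in>Poly_Mapping.keys P. Poly_Mapping.single \<mu> (Poly_Mapping.lookup P \<mu>)) \<nu>
     = (\<Sum>\<mu>\<in>Poly_Mapping.keys P. if \<mu> = \<nu> then Poly_Mapping.lookup P \<mu> else 0)"
    by (simp add: lookup_sum lookup_single when_def)
  also have "\<dots> = Poly_Mapping.lookup P \<nu>"
    by (auto simp: in_keys_iff)
  finally show "Poly_Mapping.lookup (\<Sum>\<mu>\<in>Poly_Mapping.keys P.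
      Poly_Mapping.single \<mu> (Poly_Mapping.lookup P \<mu>)) \<nu> = Poly_Mapping.lookup P \<nu>" .
qed

lemma peval_mult: "peval f (P * Q) = peval f P * peval f Q"
proof -
  have "P * Q = (\<Sum>\<mu>\<in>Poly_Mapping.keys P. \<Sum>\<nu>\<in>Poly_Mapping.keys Q.
      Poly_Mapping.single (\<mu> + \<nu>) (Poly_Mapping.lookup P \<mu> * Poly_Mapping.lookup Q \<nu>))"
    by (subst (1) sum_single_lookup[of P, symmetric], subst (1) sum_single_lookup[of Q, symmetric])
       (simp add: sum_product mult_single)
  then have "peval f (P * Q) = (\<Sum>\<mu>\<in>Poly_Mapping.keys P. \<Sum>\<nu>\<in>Poly_Mapping.keys Q.
      (of_int (Poly_Mapping.lookup P \<mu>) * monom_eval f \<mu>) * (of_int (Poly_Mapping.lookup Q \<nu>) * monom_eval f \<nu>))"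
    by (simp add: peval_sum peval_single monom_eval_add mult_ac)
  also have "\<dots> = peval f P * peval f Q"
    by (simp add: peval_eq_sum_monom_eval sum_product)
  finally show ?thesis .
qed

lemma peval_1 [simp]: "peval f 1 = 1"
  using peval_single[of f 0 1] by simp

lemma peval_Var [simp]: "peval f (Var v) = f v"
  by (simp add: Var_def peval_single)

lemma peval_of_int [simp]: "peval f (of_int c) = of_int c"
  using peval_single[of f 0 c] by (simp del: single_of_int add: single_of_int[symmetric])

lemma peval_prod: "peval f (\<Prod>i\<in>I. g i) = (\<Prod>i\<in>I. peval f (g i))"
  by (induction I rule: infinite_finite_induct) (auto simp: peval_mult)

lemma peval_power: "peval f (x ^ n) = peval f x ^ n"
  by (induction n) (auto simp: peval_mult)

lemma peval_peval: "peval g (peval f P) = peval (\<lambda>v. peval g (f v)) P"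
  unfolding peval_eq_sum_monom_eval[of f] peval_eq_sum_monom_eval[of "\<lambda>v. peval g (f v)"]
  by (simp add: peval_sum peval_mult monom_eval_def peval_prod peval_power)

lemma Var_power: "Var v ^ k = Poly_Mapping.single (Poly_Mapping.single v k) 1"
  by (induction k) (simp_all add: Var_def mult_single single_add[symmetric])

lemma monom_eval_Var: "monom_eval Var \<mu> = Poly_Mapping.single \<mu> 1"
proof (induction \<mu> rule: update_induct)
  case const
  then show ?case by simp
next
  case (update \<mu> v k)
  have "Poly_Mapping.update v k \<mu> = \<mu> + Poly_Mapping.single v k"
    using update.hyps(1)
    by (intro poly_mapping_eqI) (auto simp: lookup_update lookup_add lookup_single when_def in_keys_iff)
  then show ?case
    by (simp add: monom_eval_add update.IH Var_power mult_single)
qed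

lemma peval_Var_id: "peval Var P = P"
proof -
  have "of_int c * Poly_Mapping.single \<mu> 1 = Poly_Mapping.single \<mu> c" for c and \<mu> :: "'a \<Rightarrow>\<^sub>0 nat"
    by (simp del: single_of_int add: single_of_int[symmetric] mult_single)
  then show ?thesis
    by (subst (2) sum_single_lookup[symmetric]) (simp add: peval_eq_sum_monom_eval monom_eval_Var)
qed

section \<open>Ideals generated by a set\<close>

lemma gen_ideal_intro:
  assumes "finite F" "F \<subseteq> S" "x = (\<Sum>s\<in>F. c s * s)"
  shows "x \<in> gen_ideal S"
  unfolding gen_ideal_def using assms by blast

lemma gen_ideal_0 [simp]: "0 \<in> gen_ideal S"
  by (rule gen_ideal_intro[of "{}"]) auto

lemma gen_ideal_base: "s \<in> S \<Longrightarrow> s \<in> gen_ideal S"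
  by (rule gen_ideal_intro[of "{s}" _ _ "\<lambda>_. 1"]) auto

lemma gen_ideal_add:
  assumes "x \<in> gen_ideal S" "y \<in> gen_ideal S"
  shows "x + y \<in> gen_ideal S"
proof -
  from assms obtain F c G d where F: "finite F" "F \<subseteq> S" "x = (\<Sum>s\<in>F. c s * s)"
    and G: "finite G" "G \<subseteq> S" "y = (\<Sum>s\<in>G. d s * s)"
    unfolding gen_ideal_def by blast
  define e where "e s = (if s \<in> F then c s else 0) + (if s \<in> G then d s else 0)" for s
  have x: "(\<Sum>s\<in>F \<union> G. (if s \<in> F then c s else 0) * s) = x"
    using F G by (simp add: if_distrib[of "\<lambda>t. t * _"] sum.If_cases Int_absorb1)
  have y: "(\<Sum>s\<in>F \<union> G. (if s \<in> G then d s else 0) * s) = y"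
    using F G by (simp add: if_distrib[of "\<lambda>t. t * _"] sum.If_cases Int_absorb1)
  have "x + y = (\<Sum>s\<in>F \<union> G. e s * s)"
    unfolding e_def distrib_right sum.distrib x y ..
  then show ?thesis
    using F G by (intro gen_ideal_intro[of "F \<union> G" S _ e]) auto
qed

lemma gen_ideal_mult_left:
  assumes "x \<in> gen_ideal S"
  shows "r * x \<in> gen_ideal S"
proof -
  from assms obtain F c where F: "finite F" "F \<subseteq> S" "x = (\<Sum>s\<in>F. c s * s)"
    unfolding gen_ideal_def by blast
  have "r * x = (\<Sum>s\<in>F. (r * c s) * s)"
    unfolding F(3) sum_distrib_left by (simp only: mult.assoc)
  then show ?thesis
    using F by (intro gen_ideal_intro[of F S _ "\<lambda>s. r * c s"]) auto
qed

lemma gen_ideal_mult_right: "x \<in> gen_ideal S \<Longrightarrow> x * r \<in> gen_ideal S"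
  using gen_ideal_mult_left[of x S r] by (simp add: mult.commute)

lemma gen_ideal_uminus: "x \<in> gen_ideal S \<Longrightarrow> - x \<in> gen_ideal S"
  using gen_ideal_mult_left[of x S "- 1"] by simp

lemma gen_ideal_diff: "x \<in> gen_ideal S \<Longrightarrow> y \<in> gen_ideal S \<Longrightarrow> x - y \<in> gen_ideal S"
  using gen_ideal_add[of x S "- y"] gen_ideal_uminus[of y S] by simp

lemma gen_ideal_sum: "(\<And>i. i \<in> I \<Longrightarrow> g i \<in> gen_ideal S) \<Longrightarrow> (\<Sum>i\<in>I. g i) \<in> gen_ideal S"
  by (induction I rule: infinite_finite_induct) (auto intro: gen_ideal_add)

lemma peval_image_gen_ideal:
  assumes "\<And>s. s \<in> S \<Longrightarrow> peval g s \<in> gen_ideal T"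
  shows "peval g ` gen_ideal S \<subseteq> gen_ideal T"
proof
  fix y assume "y \<in> peval g ` gen_ideal S"
  then obtain F c where F: "finite F" "F \<subseteq> S" "y = peval g (\<Sum>s\<in>F. c s * s)"
    unfolding gen_ideal_def by blast
  show "y \<in> gen_ideal T"
    unfolding F(3) peval_sum peval_mult using F(2) assms by (intro gen_ideal_sum gen_ideal_mult_left) auto
qed

lemma gen_ideal_cong_sym: "a - b \<in> gen_ideal S \<Longrightarrow> b - a \<in> gen_ideal S"
  using gen_ideal_uminus[of "a - b" S] by simp

lemma gen_ideal_cong_trans: "a - b \<in> gen_ideal S \<Longrightarrow> b - c \<in> gen_ideal S \<Longrightarrow> a - c \<in> gen_ideal S"
  using gen_ideal_add[of "a - b" S "b - c"] by simp

lemma gen_ideal_cong_add: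
  "a - b \<in> gen_ideal S \<Longrightarrow> c - d \<in> gen_ideal S \<Longrightarrow> (a + c) - (b + d) \<in> gen_ideal S"
  using gen_ideal_add[of "a - b" S "c - d"] by (simp add: algebra_simps)

lemma gen_ideal_cong_mult:
  assumes "a - b \<in> gen_ideal S" "c - d \<in> gen_ideal S"
  shows "a * c - b * d \<in> gen_ideal S"
proof -
  have "a * (c - d) + (a - b) * d \<in> gen_ideal S"
    using assms by (intro gen_ideal_add gen_ideal_mult_left gen_ideal_mult_right)
  then show ?thesis by (simp add: algebra_simps)
qed

lemma gen_ideal_cong_sum:
  "(\<And>i. i \<in> I \<Longrightarrow> f i - g i \<in> gen_ideal S) \<Longrightarrow> (\<Sum>i\<in>I. f i) - (\<Sum>i\<in>I. g i) \<in> gen_ideal S"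
  by (induction I rule: infinite_finite_induct) (auto intro: gen_ideal_cong_add)

lemma gen_ideal_cong_prod:
  "(\<And>i. i \<in> I \<Longrightarrow> f i - g i \<in> gen_ideal S) \<Longrightarrow> (\<Prod>i\<in>I. f i) - (\<Prod>i\<in>I. g i) \<in> gen_ideal S"
  by (induction I rule: infinite_finite_induct) (auto intro: gen_ideal_cong_mult)

lemma gen_ideal_cong_power: "a - b \<in> gen_ideal S \<Longrightarrow> a ^ n - b ^ n \<in> gen_ideal S"
  by (induction n) (auto intro: gen_ideal_cong_mult)

lemma peval_gen_ideal_cong:
  assumes "\<And>v. f v - g v \<in> gen_ideal S"
  shows "peval f P - peval g P \<in> gen_ideal S"
  unfolding peval_eq_sum_monom_eval monom_eval_def using assms
  by (intro gen_ideal_cong_sum gen_ideal_cong_mult gen_ideal_cong_prod gen_ideal_cong_power) auto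

section \<open>Relations in \<open>HS\<^sup>m(k)\<close>\<close>

lemma HSk_ideal_eq: "HSk_ideal m = gen_ideal (hs_rels m UNIV (+) (*) 1)"
  by (simp add: HSk_ideal_def hs_ideal_def)

lemma HSk_ideal_rel: "x \<in> hs_rels m UNIV (+) (*) 1 \<Longrightarrow> x \<in> HSk_ideal m"
  unfolding HSk_ideal_eq by (rule gen_ideal_base)

lemma HSk_Var_beyond: "m < enat n \<Longrightarrow> Var (n, c :: 'k::comm_ring_1) \<in> HSk_ideal m"
  by (rule HSk_ideal_rel) (auto simp: hs_rels_def)

lemma HSk_Var_add: "Var (n, a + b :: 'k::comm_ring_1) - (Var (n, a) + Var (n, b)) \<in> HSk_ideal m"
proof (cases "enat n \<le> m")
  case True
  then have "Var (n, a + b) - Var (n, a) - Var (n, b) \<in> HSk_ideal m"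
    by (intro HSk_ideal_rel) (unfold hs_rels_def, blast)
  then show ?thesis by (simp add: algebra_simps)
next
  case False
  then have "m < enat n" by simp
  then show ?thesis
    using HSk_Var_beyond[of m n] unfolding HSk_ideal_eq by (intro gen_ideal_diff gen_ideal_add) auto
qed

lemma HSk_Var_0: "Var (n, 0 :: 'k::comm_ring_1) \<in> HSk_ideal m"
  using HSk_Var_add[of n "0::'k" 0 m] gen_ideal_uminus[of "Var (n, 0::'k) - (Var (n, 0) + Var (n, 0))"]
  unfolding HSk_ideal_eq by simp

lemma HSk_Var_sum: "Var (n, \<Sum>j\<in>F. x j :: 'k::comm_ring_1) - (\<Sum>j\<in>F. Var (n, x j)) \<in> HSk_ideal m"
proof (induction F rule: infinite_finite_induct)
  case (insert j F)
  have "(Var (n, x j) + Var (n, \<Sum>j\<in>F. x j)) - (Var (n, x j) + (\<Sum>j\<in>F. Var (n, x j))) \<in> HSk_ideal m"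
    using insert.IH by (simp add: HSk_ideal_eq)
  with HSk_Var_add[of n "x j" "\<Sum>j\<in>F. x j" m] show ?case
    using insert.hyps unfolding HSk_ideal_eq by (simp add: gen_ideal_cong_trans)
qed (use HSk_Var_0 in simp_all)

lemma HSk_Var_mult: "enat n \<le> m \<Longrightarrow>
   Var (n, a * b :: 'k::comm_ring_1) - (\<Sum>i\<le>n. Var (i, a) * Var (n - i, b)) \<in> HSk_ideal m"
  by (intro HSk_ideal_rel) (unfold hs_rels_def, blast)

lemma HSk_Var_0_1: "Var (0, 1 :: 'k::comm_ring_1) - 1 \<in> HSk_ideal m"
  by (intro HSk_ideal_rel) (unfold hs_rels_def, blast)

text \<open>By induction, the Leibniz rule for \<open>1 \<cdot> 1\<close> reads \<open>d\<^sup>[l] 1 \<equiv> 2 d\<^sup>[l] 1\<close>.\<close>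

lemma HSk_Var_1: "0 < l \<Longrightarrow> Var (l, 1 :: 'k::comm_ring_1) \<in> HSk_ideal m"
proof (induction l rule: less_induct)
  case (less l)
  let ?I = "gen_ideal (hs_rels m UNIV (+) (*) (1::'k))"
  define V where "V = Var (l, 1 :: 'k)"
  show ?case
  proof (cases "enat l \<le> m")
    case False
    then show ?thesis by (intro HSk_Var_beyond) auto
  next
    case True
    have leibniz: "V - (\<Sum>i\<le>l. Var (i, 1::'k) * Var (l - i, 1)) \<in> ?I"
      using HSk_Var_mult[OF True, of 1 1] by (simp add: V_def HSk_ideal_eq)
    have "Var (i, 1::'k) * Var (l - i, 1) - ((if i = 0 then V else 0) + (if i = l then V else 0)) \<in> ?I"
      if i_le: "i \<le> l" for i
    proof -
      consider "i = 0" | "i = l" | "0 < i" "i < l"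
        using i_le less.prems by fastforce
      then show ?thesis
      proof cases
        case 1
        then have "Var (i, 1::'k) * Var (l - i, 1) - 1 * V \<in> ?I"
          using HSk_Var_0_1[of m] by (intro gen_ideal_cong_mult) (auto simp: HSk_ideal_eq V_def)
        then show ?thesis using 1 less.prems by simp
      next
        case 2
        then have "Var (i, 1::'k) * Var (l - i, 1) - V * 1 \<in> ?I"
          using HSk_Var_0_1[of m] by (intro gen_ideal_cong_mult) (auto simp: HSk_ideal_eq V_def)
        then show ?thesis using 2 less.prems by simp
      next
        case 3
        then have "Var (i, 1::'k) \<in> ?I" using less.IH by (simp add: HSk_ideal_eq)
        then show ?thesis using 3 by (simp add: gen_ideal_mult_right)
      qed
    qed
    then have "(\<Sum>i\<le>l. Var (i, 1::'k) * Var (l - i, 1)) - (V + V) \<in> ?I"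
      using gen_ideal_cong_sum[of "{..l}" "\<lambda>i. Var (i, 1::'k) * Var (l - i, 1)"
          "\<lambda>i. (if i = 0 then V else 0) + (if i = l then V else 0)"]
      by (simp add: sum.distrib)
    with leibniz have "V - (V + V) \<in> ?I"
      by (rule gen_ideal_cong_trans)
    then have "- (V - (V + V)) \<in> ?I"
      by (rule gen_ideal_uminus)
    then show ?thesis by (simp add: V_def HSk_ideal_eq)
  qed
qed

section \<open>The map \<open>iota\<close>\<close>

lemma A_const_carrier: "A_const c \<in> A_carrier m"
  by (auto simp: A_const_def A_carrier_def zero_enat_def[symmetric])

lemma A_const_add: "A_const (a + b) = A_add (A_const a) (A_const b)"
  by (auto simp: A_const_def A_add_def)

lemma A_const_mult: "A_const (a * b) = A_mul m (A_const a) (A_const b :: nat \<Rightarrow> 'k::comm_ring_1)"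
proof
  fix i
  have "(\<Sum>j\<le>i. A_const a j * A_const b (i - j)) = (if i = 0 then a * b else 0)"
    by (cases "i = 0") (auto simp: A_const_def intro: sum.neutral)
  then show "A_const (a * b) i = A_mul m (A_const a) (A_const b) i"
    by (simp add: A_mul_def A_const_def zero_enat_def[symmetric])
qed

lemma A_add_carrier: "a \<in> A_carrier m \<Longrightarrow> b \<in> A_carrier m \<Longrightarrow> A_add a b \<in> A_carrier m"
  by (auto simp: A_carrier_def A_add_def)

lemma A_mul_carrier: "A_mul m a b \<in> A_carrier m"
  by (auto simp: A_carrier_def A_mul_def)

lemma A_pipow_carrier: "A_pipow m i \<in> A_carrier m"
  by (auto simp: A_carrier_def A_pipow_def)

lemma iota_Var [simp]: "iota (Var (n, c)) = Var (n, A_const c)"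
  by (simp add: iota_def)

lemma iota_hs_rels:
  assumes "s \<in> hs_rels m UNIV (+) (*) (1::'k::comm_ring_1)"
  shows "iota s \<in> hs_rels m (A_carrier m) A_add (A_mul m) A_one"
proof -
  from assms consider (beyond) n a where "s = Var (n, a)" "m < enat n"
    | (add) n a b where "s = Var (n, a + b) - Var (n, a) - Var (n, b)" "enat n \<le> m"
    | (mult) n a b where "s = Var (n, a * b) - (\<Sum>i\<le>n. Var (i, a) * Var (n - i, b))" "enat n \<le> m"
    | (one) "s = Var (0, 1) - 1"
    unfolding hs_rels_def by blast
  then show ?thesis
  proof cases
    case beyond
    then show ?thesis unfolding hs_rels_def by auto
  next
    case add
    then have "iota s = Var (n, A_add (A_const a) (A_const b)) - Var (n, A_const a) - Var (n, A_const b)"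
      by (simp add: iota_def peval_diff A_const_add)
    then show ?thesis using add A_const_carrier unfolding hs_rels_def by blast
  next
    case mult
    then have "iota s = Var (n, A_mul m (A_const a) (A_const b))
        - (\<Sum>i\<le>n. Var (i, A_const a) * Var (n - i, A_const b))"
      by (simp add: iota_def peval_diff peval_sum peval_mult A_const_mult[of _ _ m])
    then show ?thesis using mult A_const_carrier unfolding hs_rels_def by blast
  next
    case one
    then have "iota s = Var (0, A_one) - 1"
      by (simp add: iota_def peval_diff A_one_def)
    then show ?thesis unfolding hs_rels_def by blast
  qed
qed

lemma iota_image_HSk_ideal: "iota ` (HSk_ideal m :: (nat \<times> 'k::comm_ring_1) ipoly set) \<subseteq> HSA_ideal m"
  unfolding HSk_ideal_eq HSA_ideal_def hs_ideal_def iota_def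
  by (rule peval_image_gen_ideal) (use iota_hs_rels in \<open>auto simp: iota_def intro: gen_ideal_base\<close>)

section \<open>The map \<open>phibar\<close>\<close>

lemma phibar_Var: "phibar m (Var (n, a)) =
   (if enat n \<le> m \<and> a \<in> A_carrier m then (\<Sum>i\<le>n. Var (n - i, a i)) else 0)"
  by (simp add: phibar_def)

lemma phibar_Var_carrier: "enat n \<le> m \<Longrightarrow> a \<in> A_carrier m \<Longrightarrow>
   phibar m (Var (n, a)) = (\<Sum>i\<le>n. Var (n - i, a i))"
  by (simp add: phibar_Var)

lemma phibar_diff: "phibar m (x - y) = phibar m x - phibar m y"
  by (simp add: phibar_def peval_diff)

lemma phibar_0 [simp]: "phibar m 0 = 0"
  by (simp add: phibar_def)

lemma phibar_1 [simp]: "phibar m 1 = 1"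
  by (simp add: phibar_def)

text \<open>Both sides sum \<open>G s j t u\<close> over \<open>s + j + t + u = n\<close>; the terms are matched by
  \<open>(i, j, s) \<mapsto> (s + j, j, i - j)\<close>.\<close>

lemma sum_convolution_reindex:
  "(\<Sum>i\<le>(n::nat). \<Sum>j\<le>i. \<Sum>s\<le>n-i. G s j (n - i - s) (i - j)) =
   (\<Sum>i\<le>n. \<Sum>j\<le>i. \<Sum>t\<le>n-i. (G (i - j) j (n - i - t) t :: 'a::comm_monoid_add))"
proof -
  have triple: "(\<Sum>i\<le>n. \<Sum>j\<le>i. \<Sum>s\<le>n-i. f i j s) =
      (\<Sum>(i, j, s)\<in>{(i, j, s). i \<le> n \<and> j \<le> i \<and> s \<le> n - i}. f i j s)"
    for f :: "nat \<Rightarrow> nat \<Rightarrow> nat \<Rightarrow> 'a"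
  proof -
    have "(\<Sum>i\<le>n. \<Sum>j\<le>i. \<Sum>s\<le>n-i. f i j s) =
        (\<Sum>(i, js)\<in>Sigma {..n} (\<lambda>i. {..i} \<times> {..n-i}). f i (fst js) (snd js))"
      by (simp add: sum.cartesian_product sum.Sigma split_def)
    also have "\<dots> = (\<Sum>(i, j, s)\<in>{(i, j, s). i \<le> n \<and> j \<le> i \<and> s \<le> n - i}. f i j s)"
      by (rule sum.cong) (auto simp: split_def)
    finally show ?thesis .
  qed
  show ?thesis
    unfolding triple
    by (rule sum.reindex_bij_witness[where i = "\<lambda>(i, j, t). (t + j, j, i - j)"
          and j = "\<lambda>(i, j, s). (s + j, j, i - j)"]) (auto simp: add.commute)
qed

lemma phibar_Leibniz_rel:
  fixes a b :: "nat \<Rightarrow> 'k::comm_ring_1"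
  assumes n: "enat n \<le> m" and a: "a \<in> A_carrier m" and b: "b \<in> A_carrier m"
  shows "phibar m (Var (n, A_mul m a b) - (\<Sum>i\<le>n. Var (i, a) * Var (n - i, b))) \<in> HSk_ideal m"
proof -
  let ?I = "gen_ideal (hs_rels m UNIV (+) (*) (1::'k))"
  define G where "G s j t u = Var (s, a j) * Var (t, b u)" for s j t u :: nat
  have le: "enat i \<le> m" if "i \<le> n" for i
    using n that by (meson enat_ord_simps(1) order_trans)
  have "phibar m (Var (n, A_mul m a b)) = (\<Sum>i\<le>n. Var (n - i, A_mul m a b i))"
    by (rule phibar_Var_carrier[OF n A_mul_carrier])
  also have "\<dots> = (\<Sum>i\<le>n. Var (n - i, \<Sum>j\<le>i. a j * b (i - j)))"
    by (intro sum.cong) (auto simp: A_mul_def le)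
  finally have lhs: "phibar m (Var (n, A_mul m a b)) = (\<Sum>i\<le>n. Var (n - i, \<Sum>j\<le>i. a j * b (i - j)))" .
  have rhs: "phibar m (\<Sum>i\<le>n. Var (i, a) * Var (n - i, b)) =
      (\<Sum>i\<le>n. \<Sum>j\<le>i. \<Sum>t\<le>n-i. G (i - j) j (n - i - t) t)"
    using le a b by (simp add: phibar_def peval_sum peval_mult phibar_Var[unfolded phibar_def] sum_product G_def)
  have "Var (n - i, \<Sum>j\<le>i. a j * b (i - j)) - (\<Sum>j\<le>i. \<Sum>s\<le>n-i. G s j (n - i - s) (i - j)) \<in> ?I"
    if "i \<le> n" for i
  proof (rule gen_ideal_cong_trans)
    show "Var (n - i, \<Sum>j\<le>i. a j * b (i - j)) - (\<Sum>j\<le>i. Var (n - i, a j * b (i - j))) \<in> ?I"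
      using HSk_Var_sum by (simp add: HSk_ideal_eq)
    show "(\<Sum>j\<le>i. Var (n - i, a j * b (i - j))) - (\<Sum>j\<le>i. \<Sum>s\<le>n-i. G s j (n - i - s) (i - j)) \<in> ?I"
      using HSk_Var_mult[OF le[of "n - i"]] unfolding G_def HSk_ideal_eq
      by (intro gen_ideal_cong_sum) (simp add: diff_diff_left)
  qed
  then have "(\<Sum>i\<le>n. Var (n - i, \<Sum>j\<le>i. a j * b (i - j))) -
      (\<Sum>i\<le>n. \<Sum>j\<le>i. \<Sum>s\<le>n-i. G s j (n - i - s) (i - j)) \<in> ?I"
    by (intro gen_ideal_cong_sum) simp
  then show ?thesis
    unfolding phibar_diff lhs rhs HSk_ideal_eq sum_convolution_reindex .
qed

lemma phibar_hs_rels: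
  assumes "s \<in> hs_rels m (A_carrier m) A_add (A_mul m) (A_one :: nat \<Rightarrow> 'k::comm_ring_1)"
  shows "phibar m s \<in> HSk_ideal m"
  using assms unfolding hs_rels_def
proof (elim UnE CollectE exE conjE)
  fix n a assume "s = Var (n, a)" "m < enat n \<or> a \<notin> A_carrier m"
  then show ?thesis by (auto simp: phibar_Var HSk_ideal_eq)
next
  fix n a b assume s: "s = Var (n, A_add a b) - Var (n, a) - Var (n, b)" and n: "enat n \<le> m"
    and a: "a \<in> A_carrier m" and b: "b \<in> A_carrier m"
  have "phibar m s = (\<Sum>i\<le>n. Var (n - i, a i + b i)) - (\<Sum>i\<le>n. Var (n - i, a i) + Var (n - i, b i))"
    using n a b A_add_carrier[OF a b]
    by (simp add: s phibar_diff phibar_Var A_add_def sum.distrib)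
  also have "\<dots> \<in> HSk_ideal m"
    unfolding HSk_ideal_eq using HSk_Var_add by (intro gen_ideal_cong_sum) (simp add: HSk_ideal_eq)
  finally show ?thesis .
next
  fix n a b assume "s = Var (n, A_mul m a b) - (\<Sum>i\<le>n. Var (i, a) * Var (n - i, b))" "enat n \<le> m"
    "a \<in> A_carrier m" "b \<in> A_carrier m"
  then show ?thesis using phibar_Leibniz_rel by blast
next
  assume "s \<in> {Var (0, A_one) - 1}"
  then have "phibar m s = Var (0, 1::'k) - 1"
    using phibar_Var_carrier[of 0 m A_one] A_const_carrier[of 1 m]
    by (simp add: phibar_diff A_one_def A_const_def zero_enat_def[symmetric])
  then show ?thesis using HSk_Var_0_1 by simp
qed

lemma phibar_J_gens:
  assumes "s \<in> (J_gens m :: (nat \<times> (nat \<Rightarrow> 'k::comm_ring_1)) ipoly set)"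
  shows "phibar m s \<in> HSk_ideal m"
proof -
  let ?I = "gen_ideal (hs_rels m UNIV (+) (*) (1::'k))"
  from assms obtain n i where s: "s = Var (n, A_pipow m i) - (if n = i then 1 else 0)"
    and n: "enat n \<le> m"
    unfolding J_gens_def by blast
  have "Var (n - j, A_pipow m i j :: 'k) - (if j = i then Var (n - j, 1::'k) else 0) \<in> ?I"
    if "j \<le> n" for j
  proof (cases "j = i")
    case True
    then have "enat i \<le> m" using that n by (meson enat_ord_simps(1) order_trans)
    then show ?thesis using True by (simp add: A_pipow_def)
  next
    case False
    then show ?thesis using HSk_Var_0[of "n - j" m] by (simp add: A_pipow_def HSk_ideal_eq)
  qed
  then have "(\<Sum>j\<le>n. Var (n - j, A_pipow m i j :: 'k)) - (\<Sum>j\<le>n. if j = i then Var (n - j, 1::'k) else 0) \<in> ?I"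
    by (intro gen_ideal_cong_sum) simp
  moreover have "(\<Sum>j\<le>n. if j = i then Var (n - j, 1::'k) else 0) - (if n = i then 1 else 0) \<in> ?I"
  proof (cases "i \<le> n")
    case True
    then have "(\<Sum>j\<le>n. if j = i then Var (n - j, 1::'k) else 0) = Var (n - i, 1)"
      by (simp add: sum.delta)
    moreover have "Var (n - i, 1::'k) - (if n = i then 1 else 0) \<in> ?I"
      using HSk_Var_0_1[of m] HSk_Var_1[of "n - i" m] True by (auto simp: HSk_ideal_eq)
    ultimately show ?thesis by simp
  qed (simp add: sum.delta)
  ultimately have "phibar m s \<in> ?I"
    unfolding s phibar_diff phibar_Var_carrier[OF n A_pipow_carrier]
    by (simp only: phibar_0 phibar_1 if_distrib[of "phibar m"]) (rule gen_ideal_cong_trans)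
  then show ?thesis by (simp add: HSk_ideal_eq)
qed

lemma phibar_image_HSA_J_ideal:
  "phibar m ` (HSA_J_ideal m :: (nat \<times> (nat \<Rightarrow> 'k::comm_ring_1)) ipoly set) \<subseteq> HSk_ideal m"
  unfolding HSA_J_ideal_def HSk_ideal_eq phibar_def
  by (rule peval_image_gen_ideal) (use phibar_hs_rels phibar_J_gens in \<open>auto simp: phibar_def HSk_ideal_eq\<close>)

lemma phibar_image_HSA_ideal:
  "phibar m ` (HSA_ideal m :: (nat \<times> (nat \<Rightarrow> 'k::comm_ring_1)) ipoly set) \<subseteq> HSk_ideal m"
  unfolding HSA_ideal_def hs_ideal_def HSk_ideal_eq phibar_def
  by (rule peval_image_gen_ideal) (use phibar_hs_rels in \<open>auto simp: phibar_def HSk_ideal_eq\<close>)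

lemma phibar_image_J_ideal:
  "phibar m ` (J_ideal m :: (nat \<times> (nat \<Rightarrow> 'k::comm_ring_1)) ipoly set) \<subseteq> HSk_ideal m"
  unfolding J_ideal_def HSk_ideal_eq phibar_def
  by (rule peval_image_gen_ideal) (use phibar_J_gens in \<open>auto simp: phibar_def HSk_ideal_eq\<close>)

lemma phibar_iota_cong: "phibar m (iota P) - (P :: (nat \<times> 'k::comm_ring_1) ipoly) \<in> HSk_ideal m"
proof -
  let ?I = "gen_ideal (hs_rels m UNIV (+) (*) (1::'k))"
  have "phibar m (Var (n, A_const c)) - Var (n, c) \<in> ?I" for n and c :: 'k
  proof (cases "enat n \<le> m")
    case True
    have "(\<Sum>i\<le>n. Var (n - i, A_const c i)) - (\<Sum>i\<le>n. if i = 0 then Var (n, c) else 0) \<in> ?I"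
      using HSk_Var_0 by (intro gen_ideal_cong_sum) (auto simp: A_const_def HSk_ideal_eq)
    then show ?thesis using True A_const_carrier[of c m] by (simp add: phibar_Var)
  next
    case False
    then show ?thesis using HSk_Var_beyond[of m n c]
      by (auto simp: phibar_Var HSk_ideal_eq intro: gen_ideal_uminus)
  qed
  then have "peval (\<lambda>v. phibar m (iota (Var v))) P - peval Var P \<in> ?I"
    by (intro peval_gen_ideal_cong) (simp add: split_paired_all)
  moreover have "phibar m (iota P) = peval (\<lambda>v. phibar m (iota (Var v))) P"
    by (simp add: iota_def phibar_def peval_peval)
  ultimately show ?thesis
    by (simp add: peval_Var_id HSk_ideal_eq)
qed

lemma iota_mod_HSA_J_ideal_imp_HSk_ideal:
  fixes P :: "(nat \<times> 'k::comm_ring_1) ipoly"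
  assumes "iota P \<in> HSA_J_ideal m"
  shows "P \<in> HSk_ideal m"
proof -
  have "phibar m (iota P) \<in> HSk_ideal m"
    using assms phibar_image_HSA_J_ideal by blast
  moreover have "P - phibar m (iota P) \<in> HSk_ideal m"
    using phibar_iota_cong[of m P] by (simp add: HSk_ideal_eq gen_ideal_cong_sym)
  ultimately have "(P - phibar m (iota P)) + phibar m (iota P) \<in> HSk_ideal m"
    unfolding HSk_ideal_eq by (intro gen_ideal_add)
  then show ?thesis by simp
qed

theorem proposition6p5:
  fixes p :: nat and m :: enat
  assumes p_prime: "prime p"
    and k_Fp_alg: "(of_nat p :: 'k::comm_ring_1) = 0"
    and rho_surj: "\<forall>Q. \<exists>P :: (nat \<times> 'k) ipoly. Q - iota P \<in> HSA_J_ideal m"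
  shows
    "iota ` (HSk_ideal m :: (nat \<times> 'k) ipoly set) \<subseteq> HSA_ideal m
     \<and> phibar m ` (HSA_ideal m :: (nat \<times> (nat \<Rightarrow> 'k)) ipoly set) \<subseteq> HSk_ideal m
     \<and> (\<forall>P :: (nat \<times> 'k) ipoly. phibar m (iota P) - P \<in> HSk_ideal m)
     \<and> phibar m ` (J_ideal m :: (nat \<times> (nat \<Rightarrow> 'k)) ipoly set) \<subseteq> HSk_ideal m
     \<and> phibar m ` (HSA_J_ideal m :: (nat \<times> (nat \<Rightarrow> 'k)) ipoly set) \<subseteq> HSk_ideal m
     \<and> (\<forall>P :: (nat \<times> 'k) ipoly. iota P \<in> HSA_J_ideal m \<longrightarrow> P \<in> HSk_ideal m)
     \<and> (\<forall>Q. \<exists>P :: (nat \<times> 'k) ipoly. Q - iota P \<in> HSA_J_ideal m)"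
  by (intro conjI iota_image_HSk_ideal phibar_image_HSA_ideal phibar_image_J_ideal
      phibar_image_HSA_J_ideal)
     (simp_all add: phibar_iota_cong iota_mod_HSA_J_ideal_imp_HSk_ideal rho_surj)

end
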